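(* Let $4.999\le r\le 5$ and $1\le\theta\le 2.13$, and let $q(x)=1-(r-\theta)x+(r-2\theta)x^2+\theta x^3$. Then all three roots of $q$ are real: one root $\alpha$ satisfies $\alpha<-1$, and the other two roots $\beta,\gamma$ satisfy $0<\gamma<0.56<\beta<1$.
   Context: Equivalently $q(x)=1+rx(x-1)+\theta x(x-1)^2=(1-x/\alpha)(1-x/\beta)(1-x/\gamma)$ with $\alpha,\beta,\gamma$ the roots of $q$. *)

theory Defs
  imports Complex_Main
begin

definition qpoly :: "real \<Rightarrow> real \<Rightarrow> real \<Rightarrow> real" where
  "qpoly r \<theta> x = 1 - (r - \<theta>) * x + (r - 2 * \<theta>) * x ^ 2 + \<theta> * x ^ 3"

end

theory Submission
  imports Defs
begin

text \<open>The values of \<open>q\<close> at \<open>-10, -1, 0, 0.56, 1\<close> have signs \<open>-, +, +, -, +\<close> throughout the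
  parameter box, so the intermediate value theorem gives one root in each of the intervals
  \<open>(-10,-1)\<close>, \<open>(0,0.56)\<close>, \<open>(0.56,1)\<close>. A cubic with three distinct roots is determined by them
  and its leading coefficient \<open>\<theta>\<close>. The tight sign is \<open>q(0.56) = 1 - 0.2464 r + 0.108416 \<theta>\<close>,
  which is negative only because \<open>r\<close> is close to \<open>5\<close> and \<open>\<theta>\<close> is small.\<close>

lemma quadratic_eq_zero_if_three_roots:
  fixes e0 e1 e2 a b c :: "'a::idom"
  assumes "a \<noteq> b" "a \<noteq> c" "b \<noteq> c"
    and "e0 + e1 * a + e2 * a^2 = 0" "e0 + e1 * b + e2 * b^2 = 0" "e0 + e1 * c + e2 * c^2 = 0"
  shows "e0 = 0 \<and> e1 = 0 \<and> e2 = 0"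
proof -
  have "(a - b) * (e1 + e2 * (a + b)) = (e0 + e1 * a + e2 * a^2) - (e0 + e1 * b + e2 * b^2)"
    by (simp add: algebra_simps power2_eq_square)
  also have "\<dots> = 0" using assms(4,5) by simp
  finally
  have ab: "e1 + e2 * (a + b) = 0" using assms(1) by simp
  have "(a - c) * (e1 + e2 * (a + c)) = (e0 + e1 * a + e2 * a^2) - (e0 + e1 * c + e2 * c^2)"
    by (simp add: algebra_simps power2_eq_square)
  also have "\<dots> = 0" using assms(4,6) by simp
  finally
  have ac: "e1 + e2 * (a + c) = 0" using assms(2) by simp
  have "e2 * (b - c) = (e1 + e2 * (a + b)) - (e1 + e2 * (a + c))"
    by (simp add: algebra_simps)
  with ab ac assms(3) have "e2 = 0" by simp
  with ab assms(4) show ?thesis by simp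
qed

lemma cubic_eq_factored_if_three_roots:
  fixes c0 c1 c2 c3 a b c :: "'a::idom"
  defines "p \<equiv> \<lambda>x. c0 + c1 * x + c2 * x^2 + c3 * x^3"
  assumes "a \<noteq> b" "a \<noteq> c" "b \<noteq> c" and "p a = 0" "p b = 0" "p c = 0"
  shows "p x = c3 * (x - a) * (x - b) * (x - c)"
proof -
  define e0 where "e0 = c0 + c3 * a * b * c"
  define e1 where "e1 = c1 - c3 * (a * b + a * c + b * c)"
  define e2 where "e2 = c2 + c3 * (a + b + c)"
  have diff: "p y - c3 * (y - a) * (y - b) * (y - c) = e0 + e1 * y + e2 * y^2" for y
    unfolding p_def e0_def e1_def e2_def
    by (simp add: algebra_simps power2_eq_square power3_eq_cube)
  have "e0 = 0 \<and> e1 = 0 \<and> e2 = 0"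
    using quadratic_eq_zero_if_three_roots[of a b c e0 e1 e2] assms(2-7) diff[of a] diff[of b] diff[of c]
    by simp
  with diff[of x] show ?thesis by simp
qed

lemma IVT_strict_sign_change:
  fixes f :: "real \<Rightarrow> real"
  assumes "a < b" "continuous_on {a..b} f" "f a * f b < 0"
  shows "\<exists>x. a < x \<and> x < b \<and> f x = 0"
proof -
  have "f a \<le> 0 \<and> 0 \<le> f b \<or> f b \<le> 0 \<and> 0 \<le> f a"
    using assms(3) by (auto simp: mult_less_0_iff)
  then obtain x where x: "a \<le> x" "x \<le> b" "f x = 0"
    using IVT'[of f a 0 b] IVT2'[of f b 0 a] assms(1,2) by force
  moreover have "x \<noteq> a" "x \<noteq> b"
    using assms(3) x(3) by auto
  ultimately show ?thesis by (metis order_le_less)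
qed

lemma qpoly_cubic_form: "qpoly r \<theta> x = 1 + (\<theta> - r) * x + (r - 2 * \<theta>) * x^2 + \<theta> * x^3"
  unfolding qpoly_def by (simp add: algebra_simps)

lemma continuous_on_qpoly: "continuous_on S (qpoly r \<theta>)"
  unfolding qpoly_def by (intro continuous_intros)

lemma qpoly_root_between:
  assumes "a < b" "qpoly r \<theta> a * qpoly r \<theta> b < 0"
  shows "\<exists>x. a < x \<and> x < b \<and> qpoly r \<theta> x = 0"
  using IVT_strict_sign_change[OF assms(1) continuous_on_qpoly assms(2)] .

lemma qpoly_at_0: "qpoly r \<theta> 0 = 1"
  by (simp add: qpoly_def)

lemma qpoly_at_1: "qpoly r \<theta> 1 = 1"
  by (simp add: qpoly_def)

context
  fixes r \<theta> :: real
  assumes r: "4.999 \<le> r" "r \<le> 5" and \<theta>: "1 \<le> \<theta>" "\<theta> \<le> 2.13"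
begin

lemma qpoly_neg_at_minus_10: "qpoly r \<theta> (-10) < 0"
  using r \<theta> by (simp add: qpoly_def)

lemma qpoly_pos_at_minus_1: "qpoly r \<theta> (-1) > 0"
  using r \<theta> by (simp add: qpoly_def)

lemma qpoly_neg_at_056: "qpoly r \<theta> 0.56 < 0"
proof -
  have "qpoly r \<theta> 0.56 = 1 - 0.2464 * r + 0.108416 * \<theta>"
    by (simp add: qpoly_def power2_eq_square power3_eq_cube field_simps)
  with r \<theta> show ?thesis by simp
qed

end

theorem mainTheorem7:
  fixes r \<theta> :: real
  assumes "4.999 \<le> r" and "r \<le> 5" and "1 \<le> \<theta>" and "\<theta> \<le> 2.13"
  shows "\<exists>\<alpha> \<beta> \<gamma> :: real.
           (\<forall>x. qpoly r \<theta> x = \<theta> * (x - \<alpha>) * (x - \<beta>) * (x - \<gamma>)) \<and>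
           \<alpha> < -1 \<and> 0 < \<gamma> \<and> \<gamma> < 0.56 \<and> 0.56 < \<beta> \<and> \<beta> < 1"
proof -
  note signs = qpoly_neg_at_minus_10[OF assms] qpoly_pos_at_minus_1[OF assms]
    qpoly_neg_at_056[OF assms] qpoly_at_0 qpoly_at_1
  obtain \<alpha> where \<alpha>: "-10 < \<alpha>" "\<alpha> < -1" "qpoly r \<theta> \<alpha> = 0"
    using qpoly_root_between[of "-10" "-1" r \<theta>] signs by (auto simp: mult_neg_pos)
  obtain \<gamma> where \<gamma>: "0 < \<gamma>" "\<gamma> < 0.56" "qpoly r \<theta> \<gamma> = 0"
    using qpoly_root_between[of 0 "0.56" r \<theta>] signs by auto
  obtain \<beta> where \<beta>: "0.56 < \<beta>" "\<beta> < 1" "qpoly r \<theta> \<beta> = 0"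
    using qpoly_root_between[of "0.56" 1 r \<theta>] signs by (auto simp: mult_neg_pos)
  have "qpoly r \<theta> x = \<theta> * (x - \<alpha>) * (x - \<beta>) * (x - \<gamma>)" for x
    using cubic_eq_factored_if_three_roots[of \<alpha> \<beta> \<gamma> 1 "\<theta> - r" "r - 2 * \<theta>" \<theta> x]
      \<alpha> \<beta> \<gamma> by (simp add: qpoly_cubic_form)
  with \<alpha> \<beta> \<gamma> show ?thesis by blast
qed

end
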